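(* Let $B$ be a metric space, $\mu$ a measure on $B$, let $c,v>0$ satisfy $c=\frac{v-n}{n(v+1)}$, and let $f:B\to\mathbb R^n$ be a map such that the following condition fails: "for every $d>c$ there exists $T>0$ such that for all $t\ge T$ and all $\Gamma\in\mathfrak P_{n+1}$, $\|g_tu_{f(\cdot)}\Gamma\|_{\mu,B}\ge e^{-\mathrm{rk}(\Gamma)dt}$." Then there exists $u>v$ such that $f(B\cap\operatorname{supp}\mu)\subset\mathcal W_u$.
   Context: For a row vector $y\in\mathbb R^n$, $u_y=\begin{pmatrix}1&y\\0&I_n\end{pmatrix}$ and $g_t=\mathrm{diag}(e^t,e^{-t/n},\dots,e^{-t/n})$, acting on column vectors of $\mathbb R^{n+1}$. $\mathfrak P_{n+1}$ is the set of nonzero primitive subgroups of $\mathbb Z^{n+1}$; $\mathrm{rk}$ is rank; $\|\Gamma\|$ is the Euclidean covolume of $\Gamma$ in its real span. $\|g\|_{\mu,B}=\sup_{B\cap\operatorname{supp}\mu}|g|$. For $u>0$, $\mathcal W_u$ is the set of $y\in\mathbb R^n$ for which there are infinitely many $q\in\mathbb Z^n$ with $|\sum y_iq_i+p|<\|q\|^{-u}$ for some $p\in\mathbb Z$. *)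

theory Defs
  imports "HOL-Analysis.Analysis"
begin

text \<open>The dimension n is CARD('n) for a finite type 'n; row vectors y in R^n
are elements of real^'n. Column vectors of R^(n+1) are elements of real^('n option), where
the coordinate None is the first coordinate (the one scaled by e^t) and Some j are the
remaining n coordinates.\<close>

definition real_vec :: "int^'m \<Rightarrow> real^'m" where
  "real_vec z = (\<chi> i. real_of_int (z $ i))"

text \<open>The matrix u_y = [[1, y],[0, I_n]].\<close>
definition u_mat :: "real^'n \<Rightarrow> real^('n::finite option)^('n option)" where
  "u_mat y = (\<chi> i j. if i = j then 1
                      else if i = None then (case j of Some k \<Rightarrow> y $ k | None \<Rightarrow> 0)
                      else 0)"

definition g_mat :: "real \<Rightarrow> real^('n::finite option)^('n option)" where
  "g_mat t = (\<chi> i j. if i = j then (if i = None then exp t else exp (- t / real CARD('n)))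
                      else 0)"

definition primitive_subgroup :: "(int^'m::finite) set \<Rightarrow> bool" where
  "primitive_subgroup \<Gamma> \<longleftrightarrow>
     0 \<in> \<Gamma> \<and> (\<forall>a\<in>\<Gamma>. \<forall>b\<in>\<Gamma>. a - b \<in> \<Gamma>) \<and> \<Gamma> \<noteq> {0} \<and>
     \<Gamma> = {z. real_vec z \<in> span (real_vec ` \<Gamma>)}"

definition rk :: "(int^'m::finite) set \<Rightarrow> nat" where
  "rk \<Gamma> = dim (real_vec ` \<Gamma>)"

definition is_Zbasis :: "(int^'m::finite) set \<Rightarrow> (int^'m) list \<Rightarrow> bool" where
  "is_Zbasis \<Gamma> bs \<longleftrightarrow> distinct bs \<and> independent (real_vec ` set bs) \<and>
     \<Gamma> = {z. \<exists>c::nat \<Rightarrow> int. z = (\<Sum>i<length bs. c i *s (bs ! i))}"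

definition det_fun :: "nat \<Rightarrow> (nat \<Rightarrow> nat \<Rightarrow> real) \<Rightarrow> real" where
  "det_fun k M = (\<Sum>p | p permutes {..<k}. of_int (sign p) * (\<Prod>i<k. M i (p i)))"

text \<open>Euclidean covolume of the lattice g Gamma in its real span: square root of the
Gram determinant of the image of a Z-basis of Gamma.\<close>
definition covol :: "real^'m^'m \<Rightarrow> (int^'m::finite) set \<Rightarrow> real" where
  "covol g \<Gamma> = (let bs = (SOME bs. is_Zbasis \<Gamma> bs) in
      sqrt (det_fun (length bs)
              (\<lambda>i j. (g *v real_vec (bs ! i)) \<bullet> (g *v real_vec (bs ! j)))))"

definition msupp :: "'a::topological_space measure \<Rightarrow> 'a set" where
  "msupp \<mu> = {x. \<forall>U. open U \<and> x \<in> U \<longrightarrow> emeasure \<mu> U > 0}"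

definition W_set :: "real \<Rightarrow> (real^'n::finite) set" where
  "W_set u = {y. infinite {q :: int^'n. \<exists>p::int.
        \<bar>y \<bullet> real_vec q + real_of_int p\<bar> < norm (real_vec q) powr (- u)}}"

end

(*
  If the condition fails for some d > c, then for arbitrarily large t there is a primitive
  subgroup Gamma with covol(g_t u_y Gamma) < exp(-rk(Gamma) d t) simultaneously for all
  y = f x, x in the support of mu. Minkowski's theorem in the real span of Gamma then gives a
  nonzero z = (p, q) in Gamma with |g_t u_y z| < C exp(-d t), that is
  |y.q + p| < C exp(-(1 + d) t) and |q| < C exp((1/n - d) t). Because d > c, eliminating t
  shows that these approximations have quality |q|^(-u) for some u > v, and letting t grow
  produces infinitely many of them, so y lies in W_u.
*)
theory Submission
  imports Defs
begin

lemma real_vec_add: "real_vec (a + b) = real_vec a + real_vec b"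
  and real_vec_diff: "real_vec (a - b) = real_vec a - real_vec b"
  and real_vec_zero: "real_vec 0 = 0"
  and real_vec_smult: "real_vec (c *s a) = of_int c *\<^sub>R real_vec a"
  and real_vec_component: "real_vec a $ i = of_int (a $ i)"
  by (simp_all add: real_vec_def vec_eq_iff)

lemma real_vec_sum: "real_vec (\<Sum>i\<in>A. f i) = (\<Sum>i\<in>A. real_vec (f i))"
  by (induction A rule: infinite_finite_induct) (simp_all add: real_vec_zero real_vec_add)

lemma inj_real_vec: "inj real_vec"
  by (rule injI) (simp add: real_vec_def vec_eq_iff)

lemma real_vec_eq_0_iff [simp]: "real_vec a = 0 \<longleftrightarrow> a = 0"
  by (metis inj_real_vec real_vec_zero injD)

section \<open>Lattice points in symmetric convex bodies\<close>

lemma finite_bounded_int_vecs: "finite {m :: int^'k::finite. \<forall>j. \<bar>m $ j\<bar> \<le> N}"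
proof -
  have "{m :: int^'k. \<forall>j. \<bar>m $ j\<bar> \<le> N} = vec_nth -` (UNIV \<rightarrow>\<^sub>E {-N..N})"
    by (auto simp: PiE_iff abs_le_iff minus_le_iff)
  moreover have "finite (vec_nth -` (UNIV \<rightarrow>\<^sub>E {-N..N}) :: (int^'k) set)"
    by (rule finite_vimageI) (auto intro: finite_PiE simp: inj_on_def vec_nth_inject)
  ultimately show ?thesis
    by simp
qed

lemma blichfeldt:
  fixes S :: "(real^'k::finite) set"
  assumes "bounded S" and "S \<in> sets lebesgue" and "measure lebesgue S > 1"
  shows "\<exists>x\<in>S. \<exists>y\<in>S. x \<noteq> y \<and> (\<forall>j. (x - y) $ j \<in> \<int>)"
proof (rule ccontr)
  assume no_pair: "\<not> ?thesis"
  define fl :: "real^'k \<Rightarrow> int^'k" where "fl x = (\<chi> j. \<lfloor>x $ j\<rfloor>)" for x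
  define cell where "cell m = S \<inter> fl -` {m}" for m
  define piece where "piece m = (\<lambda>x. x - real_vec m) ` cell m" for m
  obtain B where B: "\<And>x. x \<in> S \<Longrightarrow> norm x \<le> B"
    using assms(1) bounded_iff by blast
  have "fl ` S \<subseteq> {m. \<forall>j. \<bar>m $ j\<bar> \<le> \<lceil>B\<rceil>}"
  proof clarify
    fix x j assume "x \<in> S"
    then have "\<bar>x $ j\<bar> \<le> B"
      using B component_le_norm_cart order_trans by blast
    then show "\<bar>fl x $ j\<bar> \<le> \<lceil>B\<rceil>"
      unfolding fl_def by (simp add: abs_le_iff) (linarith)
  qed
  then have fin: "finite (fl ` S)"
    using finite_bounded_int_vecs finite_subset by blast
  have cell_meas: "cell m \<in> lmeasurable" for m
  proof (rule bounded_set_imp_lmeasurable)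
    show "bounded (cell m)"
      using assms(1) by (rule bounded_subset) (auto simp: cell_def)
    have "fl -` {m} = {x. \<forall>j. \<lfloor>x $ j\<rfloor> = m $ j}"
      by (auto simp: fl_def vec_eq_iff)
    also have "\<dots> \<in> sets borel"
      by measurable
    finally have "fl -` {m} \<in> sets lebesgue"
      by (simp add: sets_completionI_sets)
    then show "cell m \<in> sets lebesgue"
      using assms(2) by (simp add: cell_def sets.Int)
  qed
  then have piece_meas: "piece m \<in> lmeasurable" for m
    by (simp add: piece_def measurable_translation_subtract)
  have "a = b" if xa: "x \<in> piece a" and xb: "x \<in> piece b" for a b x
  proof -
    obtain p p' where "p \<in> S" "p' \<in> S" and a: "a = fl p" and b: "b = fl p'"
      and "x = p - real_vec a" "x = p' - real_vec b"
      using xa xb unfolding piece_def cell_def by blast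
    then have "p - p' = real_vec (a - b)"
      by (simp add: real_vec_diff algebra_simps)
    then have "\<forall>j. (p - p') $ j \<in> \<int>"
      by (simp add: real_vec_component)
    then have "p = p'"
      using no_pair \<open>p \<in> S\<close> \<open>p' \<in> S\<close> by blast
    then show "a = b"
      by (simp add: a b)
  qed
  then have disjoint: "pairwise (\<lambda>a b. disjnt (piece a) (piece b)) (fl ` S)"
    by (auto simp: pairwise_def disjnt_def)
  have "measure lebesgue S \<le> (\<Sum>m\<in>fl ` S. measure lebesgue (cell m))"
  proof -
    have "S = (\<Union>m\<in>fl ` S. cell m)"
      by (auto simp: cell_def)
    moreover have "measure lebesgue (\<Union>m\<in>fl ` S. cell m) \<le> (\<Sum>m\<in>fl ` S. measure lebesgue (cell m))"
      using fin cell_meas by (intro measure_UNION_le) (auto simp: fmeasurable_def)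
    ultimately show ?thesis
      by simp
  qed
  also have "\<dots> = (\<Sum>m\<in>fl ` S. measure lebesgue (piece m))"
    by (simp add: piece_def measure_translation_subtract)
  also have "\<dots> = measure lebesgue (\<Union>m\<in>fl ` S. piece m)"
    using fin piece_meas disjoint by (intro measure_UNION'[symmetric]) auto
  also have "\<dots> \<le> measure lebesgue (cbox (0::real^'k) 1)"
  proof (rule measure_mono_fmeasurable)
    have "p - real_vec (fl p) \<in> cbox 0 1" for p
      by (simp add: mem_box_cart fl_def real_vec_component frac_lt_1 less_imp_le flip: frac_def)
    then show "(\<Union>m\<in>fl ` S. piece m) \<subseteq> cbox 0 1"
      by (auto simp: piece_def cell_def) metis
    show "(\<Union>m\<in>fl ` S. piece m) \<in> sets lebesgue"
      using fin piece_meas by (intro sets.finite_UN) (auto simp: fmeasurable_def)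
  qed simp
  also have "\<dots> = 1"
  proof -
    have "(0::real^'k) \<in> cbox 0 1"
      by (simp add: mem_box_cart)
    then have "cbox (0::real^'k) 1 \<noteq> {}"
      by blast
    then show ?thesis
      by (simp add: content_cbox_cart)
  qed
  finally show False
    using assms(3) by simp
qed

lemma mem_cube_cart: "x \<in> box (- vec r) (vec r :: real^'k::finite) \<longleftrightarrow> (\<forall>j. \<bar>x $ j\<bar> < r)"
  by (auto simp: mem_box_cart abs_less_iff minus_less_iff)

lemma measure_cube_cart:
  assumes "r \<ge> 0"
  shows "measure lebesgue (box (- vec r) (vec r :: real^'k::finite)) = (2 * r) ^ CARD('k)"
proof -
  have "measure lborel (box (- vec r) (vec r :: real^'k))
      = (\<Prod>b\<in>Basis. (vec r - (- vec r :: real^'k)) \<bullet> b)"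
    using assms by (intro measure_lborel_box) (auto simp: Basis_vec_def inner_axis)
  also have "\<dots> = (\<Prod>b\<in>(Basis::(real^'k) set). 2 * r)"
    by (rule prod.cong) (auto simp: Basis_vec_def inner_axis)
  finally show ?thesis
    by simp
qed

lemma minkowski_linear_forms:
  fixes A :: "(real^('k::{finite,wellorder}))^('k::_)"
  assumes "det A \<noteq> 0" and "r > 0" and "\<bar>det A\<bar> < r ^ CARD('k)"
  obtains c :: "int^('k::_)" where "c \<noteq> 0" and "\<And>j. \<bar>(A *v real_vec c) $ j\<bar> < r"
proof -
  obtain B where AB: "A ** B = mat 1" "B ** A = mat 1"
    using assms(1) invertible_det_nz invertible_def by blast
  then have "det A * det B = 1"
    by (metis det_I det_mul)
  then have det_B: "\<bar>det B\<bar> = 1 / \<bar>det A\<bar>"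
    using assms(1) by (simp add: field_simps abs_mult[symmetric])
  define cube where "cube = box (- vec (r/2)) (vec (r/2) :: real^('k::_))"
  define S where "S = (*v) B ` cube"
  have "cube \<in> lmeasurable"
    by (simp add: cube_def)
  moreover have "measure lebesgue cube = r ^ CARD('k)"
    using measure_cube_cart[of "r/2"] assms(2) by (simp add: cube_def)
  ultimately have "S \<in> lmeasurable" and "measure lebesgue S = \<bar>det B\<bar> * r ^ CARD('k)"
    unfolding S_def
    by (simp_all add: measurable_linear_image measure_linear_image matrix_vector_mul_linear
        matrix_of_matrix_vector_mul)
  moreover have "bounded S"
    unfolding S_def cube_def by (intro bounded_linear_image bounded_box matrix_vector_mul_bounded_linear)
  moreover have "\<bar>det B\<bar> * r ^ CARD('k) > 1"
    using assms by (simp add: det_B)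
  ultimately obtain x y where "x \<in> S" "y \<in> S" "x \<noteq> y" and int: "\<forall>j. (x - y) $ j \<in> \<int>"
    using blichfeldt[of S] by (auto simp: fmeasurable_def)
  define  c :: "int^('k::_)" where "c = (\<chi> j. \<lfloor>(x - y) $ j\<rfloor>)"
  have c: "real_vec c = x - y"
    using int by (simp add: c_def real_vec_def vec_eq_iff)
  show ?thesis
  proof
    show "c \<noteq> 0"
      using c \<open>x \<noteq> y\<close> by (metis eq_iff_diff_eq_0 real_vec_eq_0_iff)
    have "A *v x \<in> cube" "A *v y \<in> cube"
      using \<open>x \<in> S\<close> \<open>y \<in> S\<close> AB(1) by (auto simp: S_def matrix_vector_mul_assoc)
    then have bounds: "\<bar>(A *v x) $ j\<bar> < r/2" "\<bar>(A *v y) $ j\<bar> < r/2" for j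
      unfolding cube_def mem_cube_cart by blast+
    show "\<bar>(A *v real_vec c) $ j\<bar> < r" for j
      unfolding c matrix_vector_mult_diff_distrib vector_minus_component
      using bounds[of j] abs_triangle_ineq4[of "(A *v x) $ j" "(A *v y) $ j"] by linarith
  qed
qed

section \<open>Gram determinants\<close>

lemma det_fun_cong:
  assumes "\<And>i j. i < k \<Longrightarrow> j < k \<Longrightarrow> M i j = M' i j"
  shows "det_fun k M = det_fun k M'"
  unfolding det_fun_def
proof (intro sum.cong refl)
  fix p assume "p \<in> {p. p permutes {..<k}}"
  then have "p i < k" if "i < k" for i
    using that permutes_in_image by fastforce
  then have "(\<Prod>i<k. M i (p i)) = (\<Prod>i<k. M' i (p i))"
    using assms by (intro prod.cong) auto
  then show "of_int (sign p) * (\<Prod>i<k. M i (p i)) = of_int (sign p) * (\<Prod>i<k. M' i (p i))"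
    by simp
qed

lemma det_fun_Suc_last_row:
  assumes "\<And>l. l < m \<Longrightarrow> H m l = 0"
  shows "det_fun (Suc m) H = H m m * det_fun m H"
proof -
  define f where "f p = of_int (sign p) * (\<Prod>i<Suc m. H i (p i))" for p
  have "det_fun (Suc m) H = sum f {p. p permutes insert m {..<m}}"
    by (simp add: det_fun_def lessThan_Suc f_def)
  also have "\<dots> = (\<Sum>b\<in>insert m {..<m}. \<Sum>q | q permutes {..<m}. f (Transposition.transpose m b \<circ> q))"
    by (rule sum_over_permutations_insert) auto
  also have "\<dots> = (\<Sum>q | q permutes {..<m}. f (Transposition.transpose m m \<circ> q))"
  proof -
    have "f (Transposition.transpose m b \<circ> q) = 0" if "b < m" "q permutes {..<m}" for b q
    proof -
      have "q m = m"
        using that(2) by (simp add: permutes_not_in)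
      then have "H m ((Transposition.transpose m b \<circ> q) m) = 0"
        using assms that(1) by simp
      then show ?thesis
        unfolding f_def by (simp add: prod_zero_iff)
    qed
    then show ?thesis
      by (simp add: sum.insert)
  qed
  also have "\<dots> = (\<Sum>q | q permutes {..<m}. H m m * (of_int (sign q) * (\<Prod>i<m. H i (q i))))"
  proof (intro sum.cong refl)
    fix q assume "q \<in> {q. q permutes {..<m}}"
    then have "q m = m"
      by (simp add: permutes_not_in)
    then show "f (Transposition.transpose m m \<circ> q) = H m m * (of_int (sign q) * (\<Prod>i<m. H i (q i)))"
      by (simp add: f_def)
  qed
  also have "\<dots> = H m m * det_fun m H"
    by (simp add: det_fun_def sum_distrib_left)
  finally show ?thesis .
qed

lemma det_fun_lower_block_triangular:
  assumes "\<And>i l. k \<le> i \<Longrightarrow> i < k + j \<Longrightarrow> l < i \<Longrightarrow> H i l = 0"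
  shows "det_fun (k + j) H = det_fun k H * (\<Prod>i\<in>{k..<k+j}. H i i)"
  using assms
proof (induction j)
  case (Suc j)
  then have "det_fun (k + Suc j) H = H (k+j) (k+j) * det_fun (k + j) H"
    using det_fun_Suc_last_row[of "k+j" H] by simp
  with Suc show ?case
    by (simp add: prod.atLeastLessThan_Suc)
qed simp

lemma det_eq_det_fun_reindex:
  fixes B :: "real^'k^'k::finite"
  assumes e: "bij_betw e {..<CARD('k)} (UNIV::'k set)"
  shows "det B = det_fun CARD('k) (\<lambda>i j. B $ e i $ e j)"
proof -
  define K where "K = CARD('k)"
  define e' where "e' = inv_into {..<K} e"
  have e: "bij_betw e {..<K} UNIV"
    using assms by (simp add: K_def)
  have e'e: "\<And>n. n < K \<Longrightarrow> e' (e n) = n" and ee': "\<And>x. e (e' x) = x"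
    and e'b: "bij_betw e' UNIV {..<K}"
    using e by (simp_all add: e'_def bij_betw_inv_into_left bij_betw_inv_into_right bij_betw_inv_into)
  have e'K: "\<And>x. e' x < K"
    using e'b by (auto simp: bij_betw_def)
  define J where "J q = (\<lambda>x. if x \<in> UNIV then e (q (e' x)) else x)" for q :: "nat \<Rightarrow> nat"
  define I where "I p = (\<lambda>n. if n \<in> {..<K} then e' (p (e n)) else n)" for p :: "'k \<Rightarrow> 'k"
  have "det_fun K (\<lambda>i j. B $ e i $ e j) = det B"
    unfolding det_def det_fun_def
  proof (rule sum.reindex_bij_witness[of _ I J])
    fix q assume "q \<in> {q. q permutes {..<K}}"
    then have q: "q permutes {..<K}"
      by simp
    show "I (J q) = q"
    proof
      fix n
      show "I (J q) n = q n"
        using q permutes_in_image[OF q, of n] by (cases "n < K") (auto simp: I_def J_def e'e permutes_not_in)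
    qed
    interpret pb: permutes_bij_finite q "{..<K}" UNIV e e' "J q"
      by unfold_locales (use q e e'e in \<open>auto simp: J_def\<close>)
    show "J q \<in> {p. p permutes UNIV}"
      using pb.permutes_p' by simp
    have "(\<Prod>a\<in>UNIV. B $ a $ J q a) = (\<Prod>n<K. B $ e n $ J q (e n))"
      by (rule prod.reindex_bij_betw[symmetric]) (rule e)
    also have "\<dots> = (\<Prod>n<K. B $ e n $ e (q n))"
      by (intro prod.cong refl) (simp add: J_def e'e)
    finally show "of_int (sign (J q)) * (\<Prod>i\<in>UNIV. B $ i $ J q i) =
        of_int (sign q) * (\<Prod>i<K. B $ e i $ e (q i))"
      using pb.sign_p' by simp
  next
    fix p assume "p \<in> {p. p permutes (UNIV::'k set)}"
    then have p: "p permutes (UNIV::'k set)"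
      by simp
    show "J (I p) = p"
      by (rule ext) (simp add: I_def J_def e'K ee')
    interpret pb: permutes_bij_finite p UNIV "{..<K}" e' e "I p"
      by unfold_locales (use p e'b ee' in \<open>auto simp: I_def\<close>)
    show "I p \<in> {q. q permutes {..<K}}"
      using pb.permutes_p' by simp
  qed
  then show ?thesis
    by (simp add: K_def)
qed

lemma det_square_eq_det_fun_gram:
  fixes A :: "real^'k^'k::finite"
  assumes "bij_betw e {..<CARD('k)} (UNIV::'k set)"
  shows "det A ^ 2 = det_fun CARD('k) (\<lambda>i j. column (e i) A \<bullet> column (e j) A)"
proof -
  have "(transpose A ** A) $ a $ b = column a A \<bullet> column b A" for a b
    by (simp add: transpose_def matrix_matrix_mult_def inner_vec_def column_def mult.commute)
  then have "det (transpose A ** A) = det_fun CARD('k) (\<lambda>i j. column (e i) A \<bullet> column (e j) A)"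
    using det_eq_det_fun_reindex[OF assms] by simp
  then show ?thesis
    by (simp add: det_mul det_transpose power2_eq_square)
qed

lemma coeffs_zero_iff_inj_independent:
  fixes v :: "nat \<Rightarrow> 'a::real_vector"
  shows "(\<forall>c. (\<Sum>i<N. c i *\<^sub>R v i) = 0 \<longrightarrow> (\<forall>i<N. c i = 0))
    \<longleftrightarrow> inj_on v {..<N} \<and> independent (v ` {..<N})"
proof safe
  assume H: "\<forall>c. (\<Sum>i<N. c i *\<^sub>R v i) = 0 \<longrightarrow> (\<forall>i<N. c i = 0)"
  show inj: "inj_on v {..<N}"
  proof (rule inj_onI, rule ccontr)
    fix i j assume ij: "i \<in> {..<N}" "j \<in> {..<N}" "v i = v j" "i \<noteq> j"
    define c where "c n = (if n = i then 1 else if n = j then -1 else (0::real))" for n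
    have "(\<Sum>n<N. c n *\<^sub>R v n) = (\<Sum>n\<in>{i,j}. c n *\<^sub>R v n)"
      by (rule sum.mono_neutral_right) (use ij in \<open>auto simp: c_def\<close>)
    also have "\<dots> = 0"
      using ij by (simp add: c_def)
    finally have "\<forall>n<N. c n = 0"
      using H by blast
    then show False
      using ij by (auto simp: c_def)
  qed
  assume "dependent (v ` {..<N})"
  then obtain u where u: "\<exists>x\<in>v ` {..<N}. u x \<noteq> 0" "(\<Sum>x\<in>v ` {..<N}. u x *\<^sub>R x) = 0"
    by (subst (asm) dependent_finite) auto
  then have "(\<Sum>n<N. u (v n) *\<^sub>R v n) = 0"
    by (simp add: sum.reindex[OF inj])
  then show False
    using H u(1) by auto
next
  fix c :: "nat \<Rightarrow> real" and i
  assume inj: "inj_on v {..<N}" and ind: "independent (v ` {..<N})"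
    and sum0: "(\<Sum>i<N. c i *\<^sub>R v i) = 0" and "i < N"
  define u where "u x = c (inv_into {..<N} v x)" for x
  have "(\<Sum>x\<in>v ` {..<N}. u x *\<^sub>R x) = (\<Sum>n<N. c n *\<^sub>R v n)"
    by (simp add: sum.reindex[OF inj] u_def inv_into_f_f[OF inj])
  then have "u (v i) = 0"
    using ind sum0 \<open>i < N\<close> by (subst (asm) dependent_finite) auto
  then show "c i = 0"
    using \<open>i < N\<close> by (simp add: u_def inv_into_f_f[OF inj])
qed

definition orthonormal_upto :: "nat \<Rightarrow> (nat \<Rightarrow> 'a::real_inner) \<Rightarrow> bool" where
  "orthonormal_upto m u \<longleftrightarrow> (\<forall>i<m. \<forall>j<m. u i \<bullet> u j = (if i = j then 1 else 0))"

lemma obtain_orthonormal_complement: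
  fixes W :: "'a::euclidean_space set"
  assumes "subspace W"
  obtains u where "orthonormal_upto (DIM('a) - dim W) u"
    and "\<And>x j. x \<in> W \<Longrightarrow> j < DIM('a) - dim W \<Longrightarrow> x \<bullet> u j = 0"
proof -
  define U where "U = {y. \<forall>x\<in>W. orthogonal x y}"
  have "dim {y \<in> UNIV. \<forall>x\<in>W. orthogonal x y} + dim W = dim (UNIV :: 'a set)"
    using assms by (intro dim_subspace_orthogonal_to_vectors) auto
  then have dim_U: "dim U = DIM('a) - dim W"
    by (simp add: U_def)
  have "subspace U"
    unfolding U_def by (rule subspace_orthogonal_to_vectors)
  then obtain B where B: "B \<subseteq> U" "pairwise orthogonal B" "\<And>x. x \<in> B \<Longrightarrow> norm x = 1"
      "independent B" "card B = dim U"
    using orthonormal_basis_subspace by metis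
  then obtain u where u: "bij_betw u {..<DIM('a) - dim W} B"
    using ex_bij_betw_nat_finite[of B] independent_imp_finite dim_U by (metis atLeast0LessThan)
  show ?thesis
  proof
    show "orthonormal_upto (DIM('a) - dim W) u"
      unfolding orthonormal_upto_def
    proof (intro allI impI)
      fix i j assume "i < DIM('a) - dim W" "j < DIM('a) - dim W"
      then have "u i \<in> B" "u j \<in> B" "u i = u j \<longleftrightarrow> i = j"
        using u by (auto simp: bij_betw_def inj_on_def)
      then show "u i \<bullet> u j = (if i = j then 1 else 0)"
        using B(2,3) by (auto simp: pairwise_def orthogonal_def norm_eq_1)
    qed
    show "x \<bullet> u j = 0" if "x \<in> W" "j < DIM('a) - dim W" for x j
      using that u B(1) by (auto simp: bij_betw_def U_def orthogonal_def)
  qed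
qed

lemma inner_sum_orthonormal:
  assumes "orthonormal_upto m u" and "j < m"
  shows "(\<Sum>i<m. c i *\<^sub>R u i) \<bullet> u j = c j"
proof -
  have "(\<Sum>i<m. c i *\<^sub>R u i) \<bullet> u j = (\<Sum>i<m. c i * (u i \<bullet> u j))"
    by (simp add: inner_sum_left)
  also have "\<dots> = (\<Sum>i<m. if i = j then c i else 0)"
    by (rule sum.cong) (use assms in \<open>auto simp: orthonormal_upto_def\<close>)
  also have "\<dots> = c j"
    using assms(2) by simp
  finally show ?thesis .
qed

lemma norm_ge_of_orthonormal_int_coeff:
  assumes "orthonormal_upto m u" and "\<And>j. j < m \<Longrightarrow> a \<bullet> u j = 0"
    and "\<And>i. i < m \<Longrightarrow> c i \<in> \<int>" and "j < m" and "c j \<noteq> 0" and "R \<ge> 0"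
  shows "R \<le> norm (a + R *\<^sub>R (\<Sum>i<m. c i *\<^sub>R u i))"
proof -
  define y where "y = (\<Sum>i<m. c i *\<^sub>R u i)"
  have "1 \<le> \<bar>c j\<bar>"
    using assms(3-5) by (intro Ints_nonzero_abs_ge1) auto
  also have "\<dots> = \<bar>y \<bullet> u j\<bar>"
    using inner_sum_orthonormal[OF assms(1,4)] by (simp add: y_def)
  also have "\<dots> \<le> norm y * norm (u j)"
    by (rule Cauchy_Schwarz_ineq2)
  also have "norm (u j) = 1"
    using assms(1,4) by (simp add: orthonormal_upto_def norm_eq_1)
  finally have "R \<le> R * norm y"
    using assms(6) mult_left_mono[of 1 "norm y" R] by simp
  then have "R ^ 2 \<le> (R * norm y) ^ 2"
    using assms(6) by (intro power_mono) auto
  also have "\<dots> = norm (R *\<^sub>R y) ^ 2"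
    using assms(6) by simp
  also have "\<dots> \<le> norm a ^ 2 + norm (R *\<^sub>R y) ^ 2"
    by simp
  also have "\<dots> = norm (a + R *\<^sub>R y) ^ 2"
  proof -
    have "a \<bullet> y = 0"
      using assms(2) by (simp add: y_def inner_sum_right)
    then have "orthogonal a (R *\<^sub>R y)"
      by (simp add: orthogonal_def)
    then show ?thesis
      by (rule norm_add_Pythagorean[symmetric])
  qed
  finally show ?thesis
    unfolding y_def by (rule power2_le_imp_le) simp
qed

lemma det_fun_gram_orthogonal_extension:
  fixes w u :: "nat \<Rightarrow> 'a::real_inner" and R :: real
  assumes "orthonormal_upto m u" and "\<And>i j. i < k \<Longrightarrow> j < m \<Longrightarrow> w i \<bullet> u j = 0"
  defines "col \<equiv> \<lambda>n. if n < k then w n else R *\<^sub>R u (n - k)"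
  shows "det_fun (k + m) (\<lambda>i j. col i \<bullet> col j) = det_fun k (\<lambda>i j. w i \<bullet> w j) * (R ^ 2) ^ m"
proof -
  have "det_fun (k + m) (\<lambda>i j. col i \<bullet> col j)
      = det_fun k (\<lambda>i j. col i \<bullet> col j) * (\<Prod>i\<in>{k..<k+m}. col i \<bullet> col i)"
  proof (rule det_fun_lower_block_triangular)
    fix i l assume "k \<le> i" "i < k + m" "l < i"
    show "col i \<bullet> col l = 0"
    proof (cases "l < k")
      case True
      then show ?thesis
        using assms(2)[of l "i - k"] \<open>k \<le> i\<close> \<open>i < k + m\<close>
        by (simp add: col_def inner_commute[of "u (i - k)"])
    next
      case False
      then show ?thesis
        using assms(1) \<open>k \<le> i\<close> \<open>i < k + m\<close> \<open>l < i\<close> by (auto simp: col_def orthonormal_upto_def)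
    qed
  qed
  also have "det_fun k (\<lambda>i j. col i \<bullet> col j) = det_fun k (\<lambda>i j. w i \<bullet> w j)"
    by (rule det_fun_cong) (simp add: col_def)
  also have "(\<Prod>i\<in>{k..<k+m}. col i \<bullet> col i) = (\<Prod>i\<in>{k..<k+m}. R ^ 2)"
    using assms(1) by (intro prod.cong refl) (auto simp: col_def orthonormal_upto_def power2_eq_square)
  finally show ?thesis
    by simp
qed

lemma sum_lessThan_add: "(\<Sum>n<k + d. f n) = (\<Sum>n<k. f n) + (\<Sum>j<d. f (k + j))" for d :: nat
  by (induction d) (simp_all add: add.assoc)

lemma obtain_completion_matrix:
  fixes w u :: "nat \<Rightarrow> real^'k::finite" and R :: real
  assumes u: "orthonormal_upto (CARD('k) - k) u"
    and wu: "\<And>i j. i < k \<Longrightarrow> j < CARD('k) - k \<Longrightarrow> w i \<bullet> u j = 0"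
    and "k \<le> CARD('k)"
  obtains A :: "real^'k^'k" and e where "bij_betw e {..<CARD('k)} (UNIV::'k set)"
    and "\<And>x. A *v x = (\<Sum>n<k. x $ e n *\<^sub>R w n) + R *\<^sub>R (\<Sum>j<CARD('k) - k. x $ e (k + j) *\<^sub>R u j)"
    and "det A ^ 2 = det_fun k (\<lambda>i j. w i \<bullet> w j) * (R ^ 2) ^ (CARD('k) - k)"
proof -
  define K where "K = CARD('k)"
  have K: "K = k + (K - k)"
    using assms(3) by (simp add: K_def)
  obtain e where e: "bij_betw e {..<K} (UNIV::'k set)"
    using ex_bij_betw_nat_finite[of "UNIV::'k set"] by (auto simp: K_def atLeast0LessThan)
  define col where "col n = (if n < k then w n else R *\<^sub>R u (n - k))" for n
  define A :: "real^'k^'k" where "A = transpose (\<chi> b. col (inv_into {..<K} e b))"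
  have col_A: "column (e n) A = col n" if "n < K" for n
    using that e by (simp add: A_def row_def bij_betw_inv_into_left)
  have "A *v x = (\<Sum>b\<in>UNIV. x $ b *\<^sub>R column b A)" for x
    by (simp add: matrix_mult_sum scalar_mult_eq_scaleR)
  also have "(\<Sum>b\<in>UNIV. x $ b *\<^sub>R column b A) = (\<Sum>n<k + (K - k). x $ e n *\<^sub>R col n)" for x
    using K col_A by (simp add: sum.reindex_bij_betw[OF e, symmetric])
  also have "\<dots> x = (\<Sum>n<k. x $ e n *\<^sub>R w n) + R *\<^sub>R (\<Sum>j<K - k. x $ e (k + j) *\<^sub>R u j)" for x
    by (simp add: sum_lessThan_add col_def scaleR_sum_right mult.commute)
  finally have A_apply: "A *v x = (\<Sum>n<k. x $ e n *\<^sub>R w n) + R *\<^sub>R (\<Sum>j<K - k. x $ e (k + j) *\<^sub>R u j)" for x .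
  have "det A ^ 2 = det_fun (k + (K - k)) (\<lambda>i j. column (e i) A \<bullet> column (e j) A)"
    using det_square_eq_det_fun_gram[of e A] e K by (simp add: K_def)
  also have "\<dots> = det_fun (k + (K - k)) (\<lambda>i j. col i \<bullet> col j)"
    using K col_A by (intro det_fun_cong) simp
  also have "\<dots> = det_fun k (\<lambda>i j. w i \<bullet> w j) * (R ^ 2) ^ (K - k)"
    unfolding col_def using u wu by (intro det_fun_gram_orthogonal_extension) (auto simp: K_def)
  finally have "det A ^ 2 = det_fun k (\<lambda>i j. w i \<bullet> w j) * (R ^ 2) ^ (K - k)" .
  with e A_apply show ?thesis
    unfolding K_def by (rule that)
qed

lemma orthonormal_decomposition_eq_0:
  assumes "orthonormal_upto m u" and "\<And>j. j < m \<Longrightarrow> a \<bullet> u j = 0"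
    and "a + R *\<^sub>R (\<Sum>i<m. c i *\<^sub>R u i) = 0" and "R \<noteq> 0"
  shows "a = 0" and "\<And>j. j < m \<Longrightarrow> c j = 0"
proof -
  define y where "y = (\<Sum>i<m. c i *\<^sub>R u i)"
  have "a = - R *\<^sub>R y"
    using assms(3) by (simp add: y_def add_eq_0_iff2)
  then have "a \<bullet> a = - R * (a \<bullet> y)"
    by (metis inner_scaleR_right)
  also have "a \<bullet> y = 0"
    using assms(2) by (simp add: y_def inner_sum_right)
  finally show "a = 0"
    by simp
  then have "y = 0"
    using assms(3,4) by (simp add: y_def)
  then show "c j = 0" if "j < m" for j
    using inner_sum_orthonormal[OF assms(1) that, of c] by (simp add: y_def)
qed

text \<open>Complete the w i by R times an orthonormal basis of their orthogonal complement to a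
  square matrix A with |det A| = sqrt D * R^(K - k). Minkowski's theorem for the cube of side
  2R/K yields a nonzero integer vector c with |A c| < R; its complement coordinates vanish, since a
  nonzero one would already force |A c| \<ge> R.\<close>

lemma exists_short_int_combination:
  fixes w :: "nat \<Rightarrow> real^('k::{finite,wellorder})"
  assumes ind: "\<And>c. (\<Sum>i<k. c i *\<^sub>R w i) = 0 \<Longrightarrow> \<forall>i<k. c i = 0"
    and R: "R > 0"
    and small: "real CARD('k) ^ CARD('k) * sqrt (det_fun k (\<lambda>i j. w i \<bullet> w j)) < R ^ k"
  obtains c :: "nat \<Rightarrow> int" where "\<exists>i<k. c i \<noteq> 0" and "norm (\<Sum>i<k. of_int (c i) *\<^sub>R w i) < R"
proof -
  define K where "K = CARD('k)"
  define D where "D = det_fun k (\<lambda>i j. w i \<bullet> w j)"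
  define W where "W = span (w ` {..<k})"
  have "inj_on w {..<k}" and indep: "independent (w ` {..<k})"
    using ind coeffs_zero_iff_inj_independent[of w k] by blast+
  then have dim_W: "dim W = k" and "k \<le> K"
    using independent_bound[of "w ` {..<k}"]
    by (simp_all add: W_def K_def dim_span dim_eq_card_independent card_image)
  obtain u where u: "orthonormal_upto (K - k) u" and uW: "\<And>x j. x \<in> W \<Longrightarrow> j < K - k \<Longrightarrow> x \<bullet> u j = 0"
    using obtain_orthonormal_complement[of W] dim_W by (auto simp: W_def K_def)
  have wW: "w i \<in> W" if "i < k" for i
    using that by (simp add: W_def span_base)
  obtain A :: "real^('k::_)^('k::_)" and e where e: "bij_betw e {..<K} (UNIV::'k set)"
    and A_apply: "\<And>x. A *v x = (\<Sum>n<k. x $ e n *\<^sub>R w n) + R *\<^sub>R (\<Sum>j<K - k. x $ e (k + j) *\<^sub>R u j)"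
    and det_A: "det A ^ 2 = D * (R ^ 2) ^ (K - k)"
  proof (rule obtain_completion_matrix[where w=w and u=u and k=k and R=R, folded K_def D_def])
    show "w i \<bullet> u j = 0" if "i < k" "j < K - k" for i j
      using uW wW that by blast
  qed (use u \<open>k \<le> K\<close> in auto)
  have lower_in_W: "(\<Sum>n<k. x $ e n *\<^sub>R w n) \<in> W" for x
    unfolding W_def by (intro span_sum span_mul span_base) auto
  have coord_e: "x = 0" if "\<And>n. n < K \<Longrightarrow> x $ e n = 0" for x :: "real^('k::_)"
  proof -
    have "x $ b = 0" for b
    proof -
      have "b \<in> e ` {..<K}"
        using e by (simp add: bij_betw_def)
      then show ?thesis
        using that by auto
    qed
    then show ?thesis
      by (simp add: vec_eq_iff)
  qed
  have "x = 0" if "A *v x = 0" for x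
  proof (rule coord_e)
    have "(\<Sum>n<k. x $ e n *\<^sub>R w n) = 0" and upper: "\<And>j. j < K - k \<Longrightarrow> x $ e (k + j) = 0"
      using orthonormal_decomposition_eq_0[OF u _ that[unfolded A_apply]] uW lower_in_W R by auto
    then have lower: "\<forall>n<k. x $ e n = 0"
      using ind[of "\<lambda>n. x $ e n"] by blast
    show "x $ e n = 0" if "n < K" for n
      using lower upper[of "n - k"] that by (cases "n < k") auto
  qed
  then have "inj ((*v) A)"
    using linear_inj_iff_eq_0[OF matrix_vector_mul_linear] by blast
  then have "det A \<noteq> 0"
    using det_nz_iff_inj[OF matrix_vector_mul_linear[of A]] by (simp add: matrix_of_matrix_vector_mul)
  have "\<bar>det A\<bar> = sqrt (det A ^ 2)"
    by simp
  also have "\<dots> = sqrt D * sqrt ((R ^ (K - k)) ^ 2)"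
    by (simp add: det_A real_sqrt_mult power_mult[symmetric] mult.commute)
  also have "\<dots> = sqrt D * R ^ (K - k)"
    using R by simp
  also have "\<dots> < (R / K) ^ K"
  proof -
    have "real K ^ K * (sqrt D * R ^ (K - k)) < R ^ k * R ^ (K - k)"
      using small R by (simp add: D_def K_def)
    also have "\<dots> = R ^ K"
      using \<open>k \<le> K\<close> by (simp flip: power_add)
    finally have "sqrt D * R ^ (K - k) < R ^ K / real K ^ K"
      by (simp add: pos_less_divide_eq mult.commute K_def)
    then show ?thesis
      by (simp add: power_divide)
  qed
  finally have "\<bar>det A\<bar> < (R / K) ^ CARD('k)"
    by (simp add: K_def)
  moreover have "R / K > 0"
    using R by (simp add: K_def)
  ultimately obtain c :: "int^('k::_)" where "c \<noteq> 0" and c: "\<And>j. \<bar>(A *v real_vec c) $ j\<bar> < R / K"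
    using minkowski_linear_forms \<open>det A \<noteq> 0\<close> by blast
  have "norm (A *v real_vec c) \<le> (\<Sum>j\<in>UNIV. \<bar>(A *v real_vec c) $ j\<bar>)"
    by (rule norm_le_l1_cart)
  also have "\<dots> < (\<Sum>j\<in>(UNIV::'k set). R / K)"
    using c by (intro sum_strict_mono) auto
  also have "\<dots> = R"
    by (simp add: K_def)
  finally have short: "norm (A *v real_vec c) < R" .
  have upper: "c $ e (k + j) = 0" if "j < K - k" for j
  proof (rule ccontr)
    assume "c $ e (k + j) \<noteq> 0"
    then have "R \<le> norm (A *v real_vec c)"
      unfolding A_apply using u uW[OF lower_in_W, of _ "real_vec c", unfolded real_vec_component] that R
      by (intro norm_ge_of_orthonormal_int_coeff) (auto simp: real_vec_component)
    with short show False
      by simp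
  qed
  define c' where "c' n = c $ e n" for n
  show ?thesis
  proof
    have "A *v real_vec c = (\<Sum>n<k. of_int (c' n) *\<^sub>R w n)"
      using upper by (simp add: A_apply c'_def real_vec_component)
    with short show "norm (\<Sum>i<k. of_int (c' i) *\<^sub>R w i) < R"
      by simp
    show "\<exists>i<k. c' i \<noteq> 0"
    proof (rule ccontr)
      assume "\<not> (\<exists>i<k. c' i \<noteq> 0)"
      then have "real_vec c $ e n = 0" if "n < K" for n
        using upper[of "n - k"] that by (cases "n < k") (auto simp: c'_def real_vec_component)
      then have "real_vec c = 0"
        by (rule coord_e)
      with \<open>c \<noteq> 0\<close> show False
        by simp
    qed
  qed
qed

section \<open>Subgroups of \<open>\<int>\<^sup>m\<close> and their bases\<close>

definition additive_subgroup :: "'a::ab_group_add set \<Rightarrow> bool" where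
  "additive_subgroup G \<longleftrightarrow> 0 \<in> G \<and> (\<forall>a\<in>G. \<forall>b\<in>G. a - b \<in> G)"

lemma additive_subgroup_zero: "additive_subgroup G \<Longrightarrow> 0 \<in> G"
  and additive_subgroup_diff: "additive_subgroup G \<Longrightarrow> a \<in> G \<Longrightarrow> b \<in> G \<Longrightarrow> a - b \<in> G"
  by (simp_all add: additive_subgroup_def)

lemma additive_subgroup_uminus: "additive_subgroup G \<Longrightarrow> a \<in> G \<Longrightarrow> - a \<in> G"
  by (metis additive_subgroup_diff additive_subgroup_zero diff_0)

lemma additive_subgroup_add: "additive_subgroup G \<Longrightarrow> a \<in> G \<Longrightarrow> b \<in> G \<Longrightarrow> a + b \<in> G"
  by (metis additive_subgroup_diff additive_subgroup_uminus diff_minus_eq_add)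

lemma additive_subgroup_int_smult:
  fixes a :: "int^'m::finite"
  assumes G: "additive_subgroup G" and "a \<in> G"
  shows "q *s a \<in> G"
proof -
  have nat_mult: "int n *s a \<in> G" for n
  proof (induction n)
    case 0
    then show ?case
      using additive_subgroup_zero[OF G] by (simp add: vector_smult_lzero)
  next
    case (Suc n)
    then have "a + int n *s a \<in> G"
      using additive_subgroup_add[OF G \<open>a \<in> G\<close>] by blast
    then show ?case
      by (simp add: vector_sadd_rdistrib)
  qed
  show ?thesis
  proof (cases "q \<ge> 0")
    case True
    then show ?thesis
      using nat_mult[of "nat q"] by simp
  next
    case False
    then have "- (int (nat (- q)) *s a) \<in> G"
      using additive_subgroup_uminus[OF G nat_mult] by blast
    with False show ?thesis
      by (simp add: vector_sneg_minus1 vector_smult_assoc)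
  qed
qed

lemma additive_subgroup_int_combination:
  fixes b :: "nat \<Rightarrow> int^'m::finite"
  assumes "additive_subgroup G" and "\<And>i. i < n \<Longrightarrow> b i \<in> G"
  shows "(\<Sum>i<n. c i *s b i) \<in> G"
  using assms(2)
proof (induction n)
  case (Suc n)
  then show ?case
    using additive_subgroup_add[OF assms(1)] additive_subgroup_int_smult[OF assms(1)] by simp
qed (simp add: additive_subgroup_zero[OF assms(1)])

lemma is_Zbasis_subset:
  assumes "is_Zbasis G bs"
  shows "set bs \<subseteq> G"
proof
  fix x assume "x \<in> set bs"
  then obtain i where i: "i < length bs" "x = bs ! i"
    by (metis in_set_conv_nth)
  have "(\<Sum>j<length bs. (if j = i then 1 else 0) *s bs ! j) = (\<Sum>j<length bs. if j = i then bs ! j else 0)"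
    by (intro sum.cong) (auto simp: vector_smult_lzero)
  also have "\<dots> = bs ! i"
    using i(1) by simp
  finally have "(\<Sum>j<length bs. (if j = i then 1 else 0) *s bs ! j) = bs ! i" .
  then have "\<exists>c::nat \<Rightarrow> int. x = (\<Sum>j<length bs. c j *s bs ! j)"
    using i(2) by (intro exI[of _ "\<lambda>j. if j = i then 1 else 0"]) simp
  with assms show "x \<in> G"
    unfolding is_Zbasis_def by blast
qed

lemma additive_subgroup_coordinate_generator:
  fixes G :: "(int^'m::finite) set"
  assumes G: "additive_subgroup G" and "z0 \<in> G" and "z0 $ a \<noteq> 0"
  obtains h where "h \<in> G" and "h $ a > 0" and "\<And>z. z \<in> G \<Longrightarrow> h $ a dvd z $ a"
proof -
  define P where "P n \<longleftrightarrow> n > 0 \<and> (\<exists>z\<in>G. z $ a = int n)" for n :: nat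
  have "P (nat \<bar>z0 $ a\<bar>)"
  proof (cases "z0 $ a > 0")
    case True
    then show ?thesis
      using \<open>z0 \<in> G\<close> by (auto simp: P_def)
  next
    case False
    then show ?thesis
      using \<open>z0 $ a \<noteq> 0\<close> additive_subgroup_uminus[OF G \<open>z0 \<in> G\<close>]
      by (auto simp: P_def intro!: bexI[of _ "- z0"])
  qed
  then have "P (LEAST n. P n)"
    by (rule LeastI)
  then obtain h where h: "h \<in> G" "h $ a = int (LEAST n. P n)" "(LEAST n. P n) > 0"
    by (auto simp: P_def)
  have "h $ a dvd z $ a" if z: "z \<in> G" for z
  proof -
    define q r where "q = z $ a div h $ a" and "r = z $ a mod h $ a"
    have r_in: "z - q *s h \<in> G"
      using additive_subgroup_diff[OF G z additive_subgroup_int_smult[OF G h(1)]] .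
    have r_eq: "(z - q *s h) $ a = r"
      by (simp add: q_def r_def minus_div_mult_eq_mod)
    have r_bounds: "0 \<le> r" "r < h $ a"
      using h by (simp_all add: r_def)
    have "r = 0"
    proof (rule ccontr)
      assume "r \<noteq> 0"
      then have "P (nat r)"
        using r_in r_eq r_bounds unfolding P_def by (intro conjI bexI[of _ "z - q *s h"]) auto
      then have "(LEAST n. P n) \<le> nat r"
        by (rule Least_le)
      then show False
        using r_bounds h(2) by linarith
    qed
    then show ?thesis
      by (simp add: r_def dvd_eq_mod_eq_0)
  qed
  with h show ?thesis
    using that by simp
qed

lemma is_Zbasis_Cons:
  fixes G :: "(int^'m::finite) set"
  assumes G: "additive_subgroup G"
    and bs: "is_Zbasis {z \<in> G. z $ a = 0} bs"
    and h: "h \<in> G" "h $ a \<noteq> 0" "\<And>z. z \<in> G \<Longrightarrow> h $ a dvd z $ a"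
  shows "is_Zbasis G (h # bs)"
proof -
  have bs_G: "set bs \<subseteq> {z \<in> G. z $ a = 0}"
    by (rule is_Zbasis_subset[OF bs])
  have "span (real_vec ` set bs) \<subseteq> {x. x $ a = 0}"
    using bs_G by (intro span_minimal) (auto simp: subspace_def real_vec_component)
  then have "real_vec h \<notin> span (real_vec ` set bs)"
    using h(2) by (auto simp: real_vec_component)
  then have indep: "independent (real_vec ` set (h # bs))"
    using bs by (auto simp: is_Zbasis_def independent_insert)
  have distinct: "distinct (h # bs)"
    using bs bs_G h(2) by (auto simp: is_Zbasis_def)
  have Cons_sum: "(\<Sum>i<length (h # bs). c i *s (h # bs) ! i) = c 0 *s h + (\<Sum>i<length bs. c (Suc i) *s bs ! i)"
    for c :: "nat \<Rightarrow> int"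
    unfolding length_Cons sum.lessThan_Suc_shift by simp
  have "G = {z. \<exists>c::nat \<Rightarrow> int. z = (\<Sum>i<length (h # bs). c i *s (h # bs) ! i)}"
  proof (intro set_eqI iffI)
    fix z assume z: "z \<in> G"
    from h(3)[OF z] obtain q where q: "z $ a = h $ a * q"
      by (rule dvdE)
    have "z - q *s h \<in> {z \<in> G. z $ a = 0}"
      using additive_subgroup_diff[OF G z additive_subgroup_int_smult[OF G h(1)]] q by (simp add: mult.commute)
    then obtain c where c: "z - q *s h = (\<Sum>i<length bs. c i *s bs ! i)"
      using bs unfolding is_Zbasis_def by blast
    have "z = (\<Sum>i<length (h # bs). (case_nat q c) i *s (h # bs) ! i)"
      unfolding Cons_sum using c by (simp add: algebra_simps)
    then show "z \<in> {z. \<exists>c::nat \<Rightarrow> int. z = (\<Sum>i<length (h # bs). c i *s (h # bs) ! i)}"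
      by blast
  next
    fix z assume "z \<in> {z. \<exists>c::nat \<Rightarrow> int. z = (\<Sum>i<length (h # bs). c i *s (h # bs) ! i)}"
    moreover have "(h # bs) ! i \<in> G" if "i < length (h # bs)" for i
      using nth_mem[OF that] h(1) bs_G by auto
    ultimately show "z \<in> G"
      using additive_subgroup_int_combination[OF G] by blast
  qed
  with indep distinct show ?thesis
    by (simp add: is_Zbasis_def)
qed

lemma exists_Zbasis:
  fixes G :: "(int^'m::finite) set"
  assumes "additive_subgroup G"
  shows "\<exists>bs. is_Zbasis G bs"
proof -
  have supported: "\<forall>G. additive_subgroup G \<and> (\<forall>z\<in>G. \<forall>i. i \<notin> S \<longrightarrow> z $ i = 0) \<longrightarrow> (\<exists>bs. is_Zbasis G bs)"
    if "finite S" for S :: "'m set"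
    using that
  proof (induction S rule: finite_induct)
    case empty
    show ?case
    proof (intro allI impI)
      fix G :: "(int^'m) set"
      assume "additive_subgroup G \<and> (\<forall>z\<in>G. \<forall>i. i \<notin> {} \<longrightarrow> z $ i = 0)"
      then have "G = {0}"
        by (auto simp: additive_subgroup_def vec_eq_iff)
      then show "\<exists>bs. is_Zbasis G bs"
        by (intro exI[of _ "[]"]) (auto simp: is_Zbasis_def independent_empty)
    qed
  next
    case (insert a S)
    show ?case
    proof (intro allI impI)
      fix G :: "(int^'m) set"
      assume asm: "additive_subgroup G \<and> (\<forall>z\<in>G. \<forall>i. i \<notin> insert a S \<longrightarrow> z $ i = 0)"
      then have G: "additive_subgroup G"
        by blast
      define G' where "G' = {z \<in> G. z $ a = 0}"
      have "additive_subgroup G'"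
        using G by (auto simp: G'_def additive_subgroup_def)
      moreover have "\<forall>z\<in>G'. \<forall>i. i \<notin> S \<longrightarrow> z $ i = 0"
        using asm by (auto simp: G'_def)
      ultimately obtain bs where bs: "is_Zbasis G' bs"
        using insert.IH by blast
      show "\<exists>bs. is_Zbasis G bs"
      proof (cases "\<exists>z0\<in>G. z0 $ a \<noteq> 0")
        case True
        then obtain h where "h \<in> G" "h $ a > 0" "\<And>z. z \<in> G \<Longrightarrow> h $ a dvd z $ a"
          using additive_subgroup_coordinate_generator[OF G] by blast
        then have "is_Zbasis G (h # bs)"
          using is_Zbasis_Cons[OF G bs[unfolded G'_def]] by simp
        then show ?thesis ..
      next
        case False
        then have "G' = G"
          by (auto simp: G'_def)
        with bs show ?thesis
          by blast
      qed
    qed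
  qed
  show ?thesis
    using supported[of UNIV] assms by simp
qed

lemma primitive_subgroup_imp_additive_subgroup:
  "primitive_subgroup G \<Longrightarrow> additive_subgroup G"
  by (simp add: primitive_subgroup_def additive_subgroup_def)

lemma rk_eq_length_Zbasis:
  assumes bs: "is_Zbasis G bs"
  shows "rk G = length bs"
proof -
  have "real_vec ` G \<subseteq> span (real_vec ` set bs)"
  proof
    fix x assume "x \<in> real_vec ` G"
    then obtain c where "x = real_vec (\<Sum>i<length bs. c i *s bs ! i)"
      using bs unfolding is_Zbasis_def by blast
    then have "x = (\<Sum>i<length bs. of_int (c i) *\<^sub>R real_vec (bs ! i))"
      by (simp add: real_vec_sum real_vec_smult)
    also have "\<dots> \<in> span (real_vec ` set bs)"
      by (intro span_sum span_mul span_base) auto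
    finally show "x \<in> span (real_vec ` set bs)" .
  qed
  moreover have "real_vec ` set bs \<subseteq> span (real_vec ` G)"
    using is_Zbasis_subset[OF bs] span_superset by blast
  ultimately have "span (real_vec ` G) = span (real_vec ` set bs)"
    by (rule span_eq[THEN iffD2, OF conjI])
  then have "rk G = dim (real_vec ` set bs)"
    unfolding rk_def by (simp only: dim_span[symmetric, of "real_vec ` G"] dim_span)
  also have "\<dots> = card (real_vec ` set bs)"
    using bs by (simp add: is_Zbasis_def dim_eq_card_independent)
  also have "\<dots> = card (set bs)"
    by (rule card_image) (rule inj_on_subset[OF inj_real_vec subset_UNIV])
  also have "\<dots> = length bs"
    using bs by (simp add: is_Zbasis_def distinct_card)
  finally show ?thesis .
qed

lemma rk_pos_if_primitive:
  assumes "primitive_subgroup G"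
  shows "rk G > 0"
proof -
  obtain bs where bs: "is_Zbasis G bs"
    using exists_Zbasis primitive_subgroup_imp_additive_subgroup[OF assms] by blast
  have "bs \<noteq> []"
    using bs assms by (auto simp: is_Zbasis_def primitive_subgroup_def)
  then show ?thesis
    using rk_eq_length_Zbasis[OF bs] by simp
qed

lemma Zbasis_coeffs_zero:
  assumes bs: "is_Zbasis G bs" and "(\<Sum>i<length bs. c i *\<^sub>R real_vec (bs ! i)) = 0"
  shows "\<forall>i<length bs. c i = 0"
proof -
  have "(\<lambda>i. real_vec (bs ! i)) ` {..<length bs} = real_vec ` set bs"
    by (auto simp: set_conv_nth image_iff)
  then have "independent ((\<lambda>i. real_vec (bs ! i)) ` {..<length bs})"
    using bs by (simp add: is_Zbasis_def)
  moreover have "inj_on (\<lambda>i. real_vec (bs ! i)) {..<length bs}"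
  proof (rule inj_onI)
    fix i j assume ij: "i \<in> {..<length bs}" "j \<in> {..<length bs}"
      and "real_vec (bs ! i) = real_vec (bs ! j)"
    then have "bs ! i = bs ! j"
      using injD[OF inj_real_vec] by blast
    then show "i = j"
      using bs ij by (simp add: is_Zbasis_def nth_eq_iff_index_eq)
  qed
  ultimately have "\<forall>c. (\<Sum>i<length bs. c i *\<^sub>R real_vec (bs ! i)) = 0 \<longrightarrow> (\<forall>i<length bs. c i = 0)"
    by (simp add: coeffs_zero_iff_inj_independent)
  with assms(2) show ?thesis
    by blast
qed

text \<open>Minkowski's theorem rests on the lemma measure_linear_image, which needs a wellordered index
  type; a lattice in real^'m is therefore moved isometrically into real^('m bit0).\<close>

lemma obtain_isometric_embedding_bit0:
  obtains E :: "real^'m::finite \<Rightarrow> real^'m bit0" where "linear E" and "\<And>x y. E x \<bullet> E y = x \<bullet> y"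
proof -
  obtain j :: "'m \<Rightarrow> 'm bit0" where j: "inj j"
    using card_le_inj[of "UNIV::'m set" "UNIV::'m bit0 set"] by auto
  define E :: "real^'m \<Rightarrow> real^'m bit0" where "E x = (\<chi> b. if b \<in> range j then x $ inv j b else 0)" for x
  have "linear E"
    by (rule linearI) (simp_all add: E_def vec_eq_iff)
  moreover have "E x \<bullet> E y = x \<bullet> y" for x y
  proof -
    have "E x \<bullet> E y = (\<Sum>b\<in>range j. x $ inv j b * y $ inv j b)"
      by (simp add: inner_vec_def E_def if_distrib sum.If_cases Int_absorb1 cong: if_cong)
    also have "\<dots> = x \<bullet> y"
      by (simp add: sum.reindex[OF j] inv_f_f[OF j] inner_vec_def)
    finally show ?thesis .
  qed
  ultimately show ?thesis
    using that by blast
qed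

text \<open>The constant K^K of the short vector bound for K = 2m, the dimension of real^(\<open>'m bit0\<close>).\<close>

definition minkowski_const :: "nat \<Rightarrow> real" where
  "minkowski_const m = real (2 * m) ^ (2 * m)"

lemma minkowski_const_ge_1: "m > 0 \<Longrightarrow> minkowski_const m \<ge> 1"
  unfolding minkowski_const_def by (rule one_le_power) simp

lemma exists_short_vector_if_small_covol:
  fixes G :: "(int^'m::finite) set" and M :: "real^'m^'m"
  assumes G: "primitive_subgroup G" and M: "\<And>x. M *v x = 0 \<Longrightarrow> x = 0"
    and "covol M G < B" and "B > 0"
  obtains z where "z \<in> G" and "z \<noteq> 0"
    and "norm (M *v real_vec z) < (minkowski_const CARD('m) * B) powr (1 / real (rk G))"
proof -
  define bs where "bs = (SOME bs. is_Zbasis G bs)"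
  have bs: "is_Zbasis G bs"
    unfolding bs_def using exists_Zbasis[OF primitive_subgroup_imp_additive_subgroup[OF G]] by (rule someI_ex)
  define k where "k = length bs"
  have k: "rk G = k" "k > 0"
    using rk_eq_length_Zbasis[OF bs] rk_pos_if_primitive[OF G] by (simp_all add: k_def)
  obtain E :: "real^'m \<Rightarrow> real^'m bit0" where E: "linear E" "\<And>x y. E x \<bullet> E y = x \<bullet> y"
    using obtain_isometric_embedding_bit0 by blast
  define F where "F x = E (M *v x)" for x
  have F: "linear F"
    unfolding F_def using linear_compose[OF matrix_vector_mul_linear E(1)] by (simp add: o_def)
  have F_inner: "F x \<bullet> F y = (M *v x) \<bullet> (M *v y)" for x y
    by (simp add: F_def E(2))
  have F_zero: "x = 0" if "F x = 0" for x
  proof -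
    have "(M *v x) \<bullet> (M *v x) = 0"
      using F_inner[of x x] that by simp
    then show ?thesis
      using M by simp
  qed
  define w where "w i = F (real_vec (bs ! i))" for i
  have w_sum: "(\<Sum>i<k. c i *\<^sub>R w i) = F (\<Sum>i<k. c i *\<^sub>R real_vec (bs ! i))" for c
    by (simp add: w_def linear_sum[OF F] linear_scale[OF F])
  have indep: "\<forall>i<k. c i = 0" if "(\<Sum>i<k. c i *\<^sub>R w i) = 0" for c
  proof -
    have "(\<Sum>i<k. c i *\<^sub>R real_vec (bs ! i)) = 0"
      using that F_zero by (simp add: w_sum)
    then show ?thesis
      using Zbasis_coeffs_zero[OF bs] by (simp add: k_def)
  qed
  have covol_eq: "covol M G = sqrt (det_fun k (\<lambda>i j. w i \<bullet> w j))"
    by (simp add: covol_def Let_def bs_def[symmetric] w_def F_inner k_def)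
  define R where "R = (minkowski_const CARD('m) * B) powr (1 / real k)"
  have "R > 0" and R_k: "R ^ k = real CARD('m bit0) ^ CARD('m bit0) * B"
    using k(2) \<open>B > 0\<close> by (simp_all add: R_def minkowski_const_def powr_realpow[symmetric] powr_powr)
  have "real CARD('m bit0) ^ CARD('m bit0) * sqrt (det_fun k (\<lambda>i j. w i \<bullet> w j)) < R ^ k"
    using \<open>covol M G < B\<close> by (simp add: R_k covol_eq)
  then obtain c :: "nat \<Rightarrow> int" where c: "\<exists>i<k. c i \<noteq> 0" "norm (\<Sum>i<k. of_int (c i) *\<^sub>R w i) < R"
    using exists_short_int_combination[of w k R] indep \<open>R > 0\<close> by blast
  define z where "z = (\<Sum>i<k. c i *s bs ! i)"
  have real_vec_z: "real_vec z = (\<Sum>i<k. of_int (c i) *\<^sub>R real_vec (bs ! i))"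
    by (simp add: z_def real_vec_sum real_vec_smult)
  show ?thesis
  proof
    show "z \<in> G"
      using bs unfolding is_Zbasis_def z_def k_def by blast
    show "z \<noteq> 0"
    proof
      assume "z = 0"
      then have "(\<Sum>i<length bs. of_int (c i) *\<^sub>R real_vec (bs ! i)) = 0"
        using real_vec_z by (simp add: k_def real_vec_zero)
      from Zbasis_coeffs_zero[OF bs this] c(1) show False
        by (auto simp: k_def)
    qed
    show "norm (M *v real_vec z) < (minkowski_const CARD('m) * B) powr (1 / real (rk G))"
      using c(2) F_inner[of "real_vec z" "real_vec z"] by (simp add: w_sum real_vec_z R_def k(1) norm_eq_sqrt_inner)
  qed
qed

section \<open>Short vectors under the flow \<open>g\<^sub>t u\<^sub>y\<close>\<close>

lemma g_mat_apply: "(g_mat t *v x) $ i = (if i = None then exp t else exp (- t / real CARD('n))) * x $ i"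
  for x :: "real^('n::finite option)"
proof -
  have "(g_mat t *v x) $ i = (\<Sum>j\<in>UNIV. if j = i then (if i = None then exp t else exp (- t / real CARD('n))) * x $ j else 0)"
    unfolding matrix_vector_mult_def g_mat_def vec_lambda_beta by (intro sum.cong) auto
  then show ?thesis
    by simp
qed

lemma u_mat_apply_None: "(u_mat y *v x) $ None = x $ None + y \<bullet> (\<chi> k. x $ Some k)"
  for x :: "real^('n::finite option)"
proof -
  have "(u_mat y *v x) $ None = (\<Sum>j\<in>insert None (range Some). (case j of None \<Rightarrow> 1 | Some k \<Rightarrow> y $ k) * x $ j)"
    unfolding matrix_vector_mult_def u_mat_def vec_lambda_beta UNIV_option_conv[symmetric]
    by (intro sum.cong) (auto split: option.split)
  also have "\<dots> = x $ None + (\<Sum>k\<in>UNIV. y $ k * x $ Some k)"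
    by (simp add: sum.reindex)
  finally show ?thesis
    by (simp add: inner_vec_def)
qed

lemma u_mat_apply_Some: "(u_mat y *v x) $ Some k = x $ Some k"
  for x :: "real^('n::finite option)"
proof -
  have "(u_mat y *v x) $ Some k = (\<Sum>j\<in>UNIV. if j = Some k then x $ j else 0)"
    unfolding matrix_vector_mult_def u_mat_def vec_lambda_beta by (intro sum.cong) auto
  then show ?thesis
    by simp
qed

lemma flow_apply_None:
  "((g_mat t ** u_mat y) *v x) $ None = exp t * (x $ None + y \<bullet> (\<chi> k. x $ Some k))"
  for x :: "real^('n::finite option)"
  by (simp add: matrix_vector_mul_assoc[symmetric] g_mat_apply u_mat_apply_None)

lemma flow_apply_Some:
  "((g_mat t ** u_mat y) *v x) $ Some k = exp (- t / real CARD('n)) * x $ Some k"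
  for x :: "real^('n::finite option)"
  by (simp add: matrix_vector_mul_assoc[symmetric] g_mat_apply u_mat_apply_Some)

lemma flow_eq_0_iff: "(g_mat t ** u_mat y) *v x = 0 \<longleftrightarrow> x = 0"
  for x :: "real^('n::finite option)"
proof
  assume "(g_mat t ** u_mat y) *v x = 0"
  then have "x $ Some k = 0" and "x $ None + y \<bullet> (\<chi> k. x $ Some k) = 0" for k
    using flow_apply_Some[of t y x k] flow_apply_None[of t y x] by simp_all
  then have "x $ i = 0" for i
    by (cases i) (simp_all flip: zero_vec_def)
  then show "x = 0"
    by (simp add: vec_eq_iff)
qed simp

lemma norm_Some_part_le: "norm (\<chi> k. x $ Some k) \<le> norm x"
  for x :: "real^('n::finite option)"
proof -
  have "(\<Sum>k\<in>UNIV. (x $ Some k)\<^sup>2) = (\<Sum>i\<in>range Some. (x $ i)\<^sup>2)"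
    by (simp add: sum.reindex)
  also have "\<dots> \<le> (\<Sum>i\<in>UNIV. (x $ i)\<^sup>2)"
    by (intro sum_mono2) auto
  finally show ?thesis
    by (simp add: norm_vec_def L2_set_def)
qed

lemma approximation_if_small_covol:
  fixes y :: "real^'n::finite" and \<Gamma> :: "(int^('n option)) set"
  assumes \<Gamma>: "primitive_subgroup \<Gamma>" and small: "covol (g_mat t ** u_mat y) \<Gamma> < exp (- real (rk \<Gamma>) * d * t)"
  obtains q :: "int^'n" and p :: int where "q \<noteq> 0 \<or> p \<noteq> 0"
    and "\<bar>y \<bullet> real_vec q + of_int p\<bar> < minkowski_const CARD('n option) * exp (- (1 + d) * t)"
    and "norm (real_vec q) < minkowski_const CARD('n option) * exp ((1 / real CARD('n) - d) * t)"
proof -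
  define M where "M = g_mat t ** u_mat y"
  let ?C = "minkowski_const CARD('n option)"
  define k where "k = rk \<Gamma>"
  have "k > 0"
    using rk_pos_if_primitive[OF \<Gamma>] by (simp add: k_def)
  have C: "?C \<ge> 1"
    by (simp add: minkowski_const_ge_1)
  obtain z where "z \<in> \<Gamma>" "z \<noteq> 0" and z: "norm (M *v real_vec z) < (?C * exp (- real k * d * t)) powr (1 / real k)"
    using exists_short_vector_if_small_covol[OF \<Gamma> flow_eq_0_iff[of t y, THEN iffD1] small exp_gt_zero]
    unfolding M_def k_def by blast
  note z
  also have "(?C * exp (- real k * d * t)) powr (1 / real k) = ?C powr (1 / real k) * exp (- d * t)"
    using \<open>k > 0\<close> C by (simp add: powr_mult exp_powr_real)
  also have "\<dots> \<le> ?C * exp (- d * t)"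
    using \<open>k > 0\<close> C powr_mono[of "1 / real k" 1 ?C] by simp
  finally have short: "norm (M *v real_vec z) < ?C * exp (- d * t)" .
  define q :: "int^'n" where "q = (\<chi> k. z $ Some k)"
  define p where "p = z $ None"
  have q: "(\<chi> k. real_of_int (z $ Some k)) = real_vec q"
    by (simp add: q_def real_vec_def)
  show ?thesis
  proof
    show "q \<noteq> 0 \<or> p \<noteq> 0"
    proof (rule ccontr)
      assume "\<not> (q \<noteq> 0 \<or> p \<noteq> 0)"
      then have "z $ i = 0" for i
        by (cases i) (auto simp: q_def p_def vec_eq_iff)
      with \<open>z \<noteq> 0\<close> show False
        by (simp add: vec_eq_iff)
    qed
    have "exp t * \<bar>y \<bullet> real_vec q + of_int p\<bar> = \<bar>(M *v real_vec z) $ None\<bar>"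
      by (simp add: M_def flow_apply_None q p_def real_vec_component abs_mult add.commute)
    also have "\<dots> < ?C * exp (- d * t)"
      using component_le_norm_cart short by (rule le_less_trans)
    finally have "exp t * \<bar>y \<bullet> real_vec q + of_int p\<bar> < ?C * exp (- d * t)" .
    moreover have "exp (- (1 + d) * t) = exp (- d * t) / exp t"
      by (simp add: exp_diff[symmetric] algebra_simps)
    ultimately show "\<bar>y \<bullet> real_vec q + of_int p\<bar> < ?C * exp (- (1 + d) * t)"
      by (simp add: pos_less_divide_eq mult.commute)
    have "(\<chi> k. (M *v real_vec z) $ Some k) = exp (- t / real CARD('n)) *\<^sub>R real_vec q"
      by (simp add: M_def flow_apply_Some real_vec_component q_def vec_eq_iff)
    then have "exp (- t / real CARD('n)) * norm (real_vec q) = norm (\<chi> k. (M *v real_vec z) $ Some k)"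
      by simp
    also have "\<dots> < ?C * exp (- d * t)"
      using norm_Some_part_le short by (rule le_less_trans)
    finally have "exp (- t / real CARD('n)) * norm (real_vec q) < ?C * exp (- d * t)" .
    moreover have "exp ((1 / real CARD('n) - d) * t) = exp (- d * t) / exp (- t / real CARD('n))"
      by (simp add: exp_diff[symmetric] algebra_simps)
    ultimately show "norm (real_vec q) < ?C * exp ((1 / real CARD('n) - d) * t)"
      by (simp add: pos_less_divide_eq mult.commute)
  qed
qed

section \<open>Diophantine approximation\<close>

lemma finite_pairs_near_integer:
  fixes f :: "'a \<Rightarrow> real"
  assumes "finite Q"
  shows "finite {(q, p :: int). q \<in> Q \<and> \<bar>f q + of_int p\<bar> < 1}"
proof (rule finite_subset)
  show "{(q, p :: int). q \<in> Q \<and> \<bar>f q + of_int p\<bar> < 1} \<subseteq> Q \<times> {- \<lceil>Max (abs ` f ` Q)\<rceil> - 1 .. \<lceil>Max (abs ` f ` Q)\<rceil> + 1}"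
  proof clarify
    fix q p assume "q \<in> Q" "\<bar>f q + of_int p\<bar> < 1"
    moreover have "\<bar>f q\<bar> \<le> Max (abs ` f ` Q)"
      using assms \<open>q \<in> Q\<close> by (intro Max_ge) auto
    ultimately show "p \<in> {- \<lceil>Max (abs ` f ` Q)\<rceil> - 1 .. \<lceil>Max (abs ` f ` Q)\<rceil> + 1}"
      by (simp add: abs_less_iff) linarith
  qed
qed (use assms in simp)

lemma mem_W_setI:
  fixes y :: "real^'n::finite"
  assumes approx: "\<And>\<epsilon>. \<epsilon> > 0 \<Longrightarrow> \<exists>q p. q \<noteq> 0 \<and> \<bar>y \<bullet> real_vec q + of_int p\<bar> < \<epsilon> \<and>
       \<bar>y \<bullet> real_vec q + of_int p\<bar> < norm (real_vec q) powr (- u)"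
  shows "y \<in> W_set u"
proof (rule ccontr)
  define Q where "Q = {q :: int^'n. \<exists>p::int. \<bar>y \<bullet> real_vec q + of_int p\<bar> < norm (real_vec q) powr (- u)}"
  assume "y \<notin> W_set u"
  then have "finite Q"
    by (simp add: W_set_def Q_def)
  have nonzero: "y \<bullet> real_vec q + of_int p \<noteq> 0" if "q \<noteq> 0" for q p
  proof
    assume rel: "y \<bullet> real_vec q + of_int p = 0"
    have "int (Suc j) *s q \<in> Q" for j
    proof -
      have "y \<bullet> real_vec (int (Suc j) *s q) + of_int (int (Suc j) * p) = real (Suc j) * (y \<bullet> real_vec q + of_int p)"
        by (simp only: real_vec_smult inner_scaleR_right) (simp add: algebra_simps)
      moreover have "int (Suc j) *s q \<noteq> 0"
        using \<open>q \<noteq> 0\<close> by (simp add: vec_eq_iff del: of_nat_Suc)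
      ultimately show ?thesis
        using rel unfolding Q_def by (intro CollectI exI[of _ "int (Suc j) * p"]) simp
    qed
    moreover have "inj (\<lambda>j. int (Suc j) *s q)"
      using \<open>q \<noteq> 0\<close> by (auto simp: inj_on_def vec_eq_iff)
    ultimately have "infinite Q"
      by (meson infinite_iff_countable_subset image_subset_iff)
    with \<open>finite Q\<close> show False
      by blast
  qed
  define F where "F = {(q, p :: int). q \<in> Q \<and> \<bar>y \<bullet> real_vec q + of_int p\<bar> < 1}"
  define \<delta> where "\<delta> = Min (insert 1 ((\<lambda>(q, p). \<bar>y \<bullet> real_vec q + of_int p\<bar>) ` F))"
  have fin: "finite (insert 1 ((\<lambda>(q, p). \<bar>y \<bullet> real_vec q + of_int p\<bar>) ` F))"
    using finite_pairs_near_integer[OF \<open>finite Q\<close>] by (simp add: F_def)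
  have "0 \<notin> Q"
    by (simp add: Q_def real_vec_zero)
  then have pos: "y \<bullet> real_vec q + of_int p \<noteq> 0" if "q \<in> Q" for q p
    using nonzero[of q p] that by auto
  have "\<delta> > 0"
    using fin unfolding \<delta>_def by (subst Min_gr_iff) (auto simp: F_def pos)
  then obtain q p where "q \<noteq> 0" and small: "\<bar>y \<bullet> real_vec q + of_int p\<bar> < \<delta>"
    and "\<bar>y \<bullet> real_vec q + of_int p\<bar> < norm (real_vec q) powr (- u)"
    using approx by blast
  then have "(q, p) \<in> F"
    using Min_le[OF fin, of 1] by (auto simp: F_def Q_def \<delta>_def)
  then have "\<bar>y \<bullet> real_vec q + of_int p\<bar> \<in> insert 1 ((\<lambda>(q, p). \<bar>y \<bullet> real_vec q + of_int p\<bar>) ` F)"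
    by (intro insertI2 image_eqI[of _ _ "(q, p)"]) simp_all
  then have "\<delta> \<le> \<bar>y \<bullet> real_vec q + of_int p\<bar>"
    unfolding \<delta>_def using fin by (rule Min_le[rotated])
  with small show False
    by simp
qed

lemma eventually_exp_le_exp:
  fixes A B \<alpha> \<beta> :: real
  assumes "B > 0" and "\<alpha> < \<beta>"
  shows "\<forall>\<^sub>F t in at_top. A * exp (- \<beta> * t) \<le> B * exp (- \<alpha> * t)"
  using eventually_ge_at_top[of "ln (max (A / B) 1) / (\<beta> - \<alpha>)"]
proof (rule eventually_mono)
  fix t assume "ln (max (A / B) 1) / (\<beta> - \<alpha>) \<le> t"
  then have "ln (max (A / B) 1) \<le> (\<beta> - \<alpha>) * t"
    using assms(2) by (simp add: divide_le_eq mult.commute)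
  then have "max (A / B) 1 \<le> exp ((\<beta> - \<alpha>) * t)"
    by (metis exp_le_cancel_iff exp_ln max.strict_coboundedI2 zero_less_one)
  then have "A \<le> B * exp ((\<beta> - \<alpha>) * t)"
    using assms(1) by (simp add: divide_le_eq mult.commute)
  then have "A * exp (- \<beta> * t) \<le> B * exp ((\<beta> - \<alpha>) * t) * exp (- \<beta> * t)"
    by (simp add: mult_right_mono)
  also have "\<dots> = B * exp (- \<alpha> * t)"
    by (simp add: mult.assoc exp_add[symmetric] algebra_simps)
  finally show "A * exp (- \<beta> * t) \<le> B * exp (- \<alpha> * t)" .
qed

text \<open>For d < 1/n the condition reads u < (1 + d) / (1/n - d); the right-hand side equals v
  exactly at d = c and increases with d.\<close>

lemma exists_exponent_above:
  fixes n v c d :: real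
  assumes "n > 0" and "v > 0" and "c = (v - n) / (n * (v + 1))" and "c < d"
  obtains u where "v < u" and "u * (1 / n - d) < 1 + d"
proof (cases "1 / n - d \<le> 0")
  case True
  then have "(v + 1) * (1 / n - d) < 1 + d"
    using assms(1,2) by (smt (verit) divide_pos_pos mult_nonneg_nonpos)
  then show ?thesis
    by (intro that[of "v + 1"]) auto
next
  case False
  define U where "U = (1 + d) / (1 / n - d)"
  have "n * (v + 1) > 0"
    using assms(1,2) by simp
  then have "v - n < d * (n * (v + 1))"
    using assms(3,4) by (simp add: pos_divide_less_eq)
  then have "v * (1 / n - d) < 1 + d"
    using assms(1) by (simp add: field_simps)
  then have "v < U"
    using False by (simp add: U_def pos_less_divide_eq)
  moreover have "(v + U) / 2 * (1 / n - d) < U * (1 / n - d)"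
    using False \<open>v < U\<close> by (intro mult_strict_right_mono) auto
  ultimately show ?thesis
    using False by (intro that[of "(v + U) / 2"]) (auto simp: U_def)
qed

lemma mem_W_set_if_small_covol_unbounded:
  fixes y :: "real^'n::finite"
  assumes small: "\<And>T. \<exists>t\<ge>T. \<exists>\<Gamma> :: (int^('n option)) set. primitive_subgroup \<Gamma> \<and>
        covol (g_mat t ** u_mat y) \<Gamma> < exp (- real (rk \<Gamma>) * d * t)"
    and "d > -1" and "u > 0" and "u * (1 / real CARD('n) - d) < 1 + d"
  shows "y \<in> W_set u"
proof (rule mem_W_setI)
  fix \<epsilon> :: real assume "\<epsilon> > 0"
  let ?C = "minkowski_const CARD('n option)"
  define a where "a = 1 / real CARD('n) - d"
  have "?C > 0"
    using minkowski_const_ge_1[of "CARD('n option)"] by simp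
  have "\<forall>\<^sub>F t in at_top. ?C * exp (- (1 + d) * t) \<le> 1 * exp (- 0 * t)
      \<and> ?C * exp (- (1 + d) * t) \<le> \<epsilon> * exp (- 0 * t)
      \<and> ?C * exp (- (1 + d) * t) \<le> ?C powr (- u) * exp (- (u * a) * t)"
    using assms(2-4) \<open>\<epsilon> > 0\<close> \<open>?C > 0\<close>
    by (intro eventually_conj eventually_exp_le_exp) (auto simp: a_def)
  then obtain T where T: "\<And>t. t \<ge> T \<Longrightarrow> ?C * exp (- (1 + d) * t) \<le> 1
      \<and> ?C * exp (- (1 + d) * t) \<le> \<epsilon> \<and> ?C * exp (- (1 + d) * t) \<le> ?C powr (- u) * exp (- (u * a) * t)"
    by (auto simp: eventually_at_top_linorder)
  obtain t \<Gamma> where "t \<ge> T" and \<Gamma>: "primitive_subgroup (\<Gamma> :: (int^('n option)) set)"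
    and small_t: "covol (g_mat t ** u_mat y) \<Gamma> < exp (- real (rk \<Gamma>) * d * t)"
    using small by blast
  obtain q p where "q \<noteq> 0 \<or> p \<noteq> 0" and approx: "\<bar>y \<bullet> real_vec q + of_int p\<bar> < ?C * exp (- (1 + d) * t)"
    and size: "norm (real_vec q) < ?C * exp (a * t)"
    unfolding a_def by (rule approximation_if_small_covol[OF \<Gamma> small_t])
  note bounds = T[OF \<open>t \<ge> T\<close>]
  have "q \<noteq> 0"
  proof
    assume "q = 0"
    then have "\<bar>of_int p :: real\<bar> < 1"
      using approx bounds by (simp add: real_vec_zero)
    with \<open>q \<noteq> 0 \<or> p \<noteq> 0\<close> \<open>q = 0\<close> show False
      by linarith
  qed
  moreover have "\<bar>y \<bullet> real_vec q + of_int p\<bar> < \<epsilon>"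
    using approx bounds by linarith
  moreover have "\<bar>y \<bullet> real_vec q + of_int p\<bar> < norm (real_vec q) powr (- u)"
  proof -
    have "?C powr (- u) * exp (- (u * a) * t) = (?C * exp (a * t)) powr (- u)"
      using \<open>?C > 0\<close> by (simp add: powr_mult exp_powr_real algebra_simps)
    also have "\<dots> < norm (real_vec q) powr (- u)"
      using size \<open>q \<noteq> 0\<close> \<open>u > 0\<close> by (intro powr_less_mono2_neg) (auto simp: real_vec_eq_0_iff)
    finally show ?thesis
      using approx bounds by linarith
  qed
  ultimately show "\<exists>q p. q \<noteq> 0 \<and> \<bar>y \<bullet> real_vec q + of_int p\<bar> < \<epsilon> \<and>
      \<bar>y \<bullet> real_vec q + of_int p\<bar> < norm (real_vec q) powr (- u)"
    by blast
qed

theorem lemma4p1: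
  fixes \<mu> :: "'a::metric_space measure"
    and f :: "'a \<Rightarrow> real^'n::finite"
    and c v :: real
  assumes "sets \<mu> = sets borel"
    and "c > 0" and "v > 0"
    and "c = (v - real CARD('n)) / (real CARD('n) * (v + 1))"
    and "\<not> (\<forall>d>c. \<exists>T>0. \<forall>t\<ge>T. \<forall>\<Gamma> :: (int^('n option)) set. primitive_subgroup \<Gamma> \<longrightarrow>
            (SUP x\<in>msupp \<mu>. ereal (covol (g_mat t ** u_mat (f x)) \<Gamma>))
              \<ge> ereal (exp (- real (rk \<Gamma>) * d * t)))"
  shows "\<exists>u>v. f ` msupp \<mu> \<subseteq> W_set u"
proof -
  obtain d where "c < d" and fails: "\<And>T. T > 0 \<Longrightarrow> \<exists>t\<ge>T. \<exists>\<Gamma> :: (int^('n option)) set. primitive_subgroup \<Gamma> \<and>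
      (SUP x\<in>msupp \<mu>. ereal (covol (g_mat t ** u_mat (f x)) \<Gamma>)) < ereal (exp (- real (rk \<Gamma>) * d * t))"
    using assms(5) by (auto simp: not_le)
  obtain u where "v < u" and u: "u * (1 / real CARD('n) - d) < 1 + d"
    using exists_exponent_above[of "real CARD('n)" v c d] assms(3,4) \<open>c < d\<close> by auto
  have "f x \<in> W_set u" if "x \<in> msupp \<mu>" for x
  proof (rule mem_W_set_if_small_covol_unbounded)
    fix T :: real
    have "max T 1 > 0"
      by simp
    obtain t \<Gamma> where "t \<ge> max T 1" and \<Gamma>: "primitive_subgroup (\<Gamma> :: (int^('n option)) set)"
      and sup: "(SUP x\<in>msupp \<mu>. ereal (covol (g_mat t ** u_mat (f x)) \<Gamma>)) < ereal (exp (- real (rk \<Gamma>) * d * t))"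
      using fails[OF \<open>max T 1 > 0\<close>] by blast
    have "ereal (covol (g_mat t ** u_mat (f x)) \<Gamma>) < ereal (exp (- real (rk \<Gamma>) * d * t))"
      using SUP_upper[OF \<open>x \<in> msupp \<mu>\<close>, of "\<lambda>x. ereal (covol (g_mat t ** u_mat (f x)) \<Gamma>)"] sup
      by (rule order.strict_trans1)
    then show "\<exists>t\<ge>T. \<exists>\<Gamma> :: (int^('n option)) set. primitive_subgroup \<Gamma> \<and>
        covol (g_mat t ** u_mat (f x)) \<Gamma> < exp (- real (rk \<Gamma>) * d * t)"
      using \<open>t \<ge> max T 1\<close> \<Gamma> by auto
  qed (use assms(2,3) \<open>c < d\<close> \<open>v < u\<close> u in auto)
  with \<open>v < u\<close> show ?thesis
    by blast
qed

end
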